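(* Let $a\in\mathbb{R}$, $\lambda\in[0,1)$, and let $f=h+\overline{g}$ with $h(z)=z+\sum_{n\ge2}a_nz^n$, $g(z)=\sum_{n\ge1}b_nz^n$ analytic in $\mathbb{D}$, satisfying $h-g=k_a$ and $g'/h'=\lambda z$ in $\mathbb{D}$. Then $$|a_2|\le |a|+\frac{\lambda}{2},\qquad |a_3|\le\frac13\left(\lambda^2+2|a|\lambda+2a^2+1\right),$$ $$|a_4|\le \frac13|a|^3+\frac23|a|+\frac14\lambda\left(\lambda^2+2|a|\lambda+2a^2+1\right),$$ $$|b_3|\le\frac13\lambda^2+\frac23|a|\lambda,\qquad |b_4|\le\frac14\lambda\left(\lambda^2+2|a|\lambda+2a^2+1\right).$$ All of these inequalities are sharp.
   Context: $\mathbb{D}$ is the open unit disk. For $a\neq0$, $k_a(z)=\frac{1}{2a}\left[\left(\frac{1+z}{1-z}\right)^a-1\right]$ (principal branch), and $k_0(z)=\frac12\log\frac{1+z}{1-z}$. *)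

theory Defs
  imports "HOL-Complex_Analysis.Complex_Analysis"
begin

definition ka :: "real \<Rightarrow> complex \<Rightarrow> complex" where
  "ka a z = (if a = 0 then (1/2) * Ln ((1 + z) / (1 - z))
             else (1 / (2 * complex_of_real a)) *
                  (((1 + z) / (1 - z)) powr (complex_of_real a) - 1))"

definition taylor_coeff :: "(complex \<Rightarrow> complex) \<Rightarrow> nat \<Rightarrow> complex" where
  "taylor_coeff f n = (deriv ^^ n) f 0 / of_nat (fact n)"

end

theory Submission
  imports Defs
begin

text \<open>The function K = h - g = k_a solves the linear equation (1 - z^2) K' = 2a K + 1 with
  K(0) = 0, and the dilatation condition g' = \<lambda> z h' turns into (1 - \<lambda> z) h' = K'. Differentiating
  both equations n times at 0 by the Leibniz rule gives recurrences for the Taylor coefficients, so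
  the first few coefficients of h and g are explicit real polynomials in a and \<lambda>. The bounds then
  follow from the triangle inequality, and every term is nonnegative when a \<ge> 0, which gives
  sharpness.\<close>

lemma higher_deriv_recurrence_quadratic_ode:
  fixes f r :: "complex \<Rightarrow> complex"
  assumes f: "f holomorphic_on S" and r: "r holomorphic_on S" and S: "open S" "0 \<in> S"
    and ode: "\<And>w. w \<in> S \<Longrightarrow> (1 + b * w + d * w^2) * deriv f w = r w"
  shows "(deriv ^^ Suc m) f 0 + of_nat m * b * (deriv ^^ m) f 0
           + of_nat (m * (m - 1)) * d * (deriv ^^ (m - 1)) f 0 = (deriv ^^ m) r 0"
proof -
  define p where "p = (\<lambda>w::complex. 1 + b * w + d * w^2)"
  define F where "F j = (deriv ^^ Suc j) f 0" for j
  have dp: "deriv p = (\<lambda>w. b + 2 * d * w)"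
    by (rule ext, rule DERIV_imp_deriv) (auto intro!: derivative_eq_intros simp: p_def)
  have ddp: "deriv (\<lambda>w. b + 2 * d * w) = (\<lambda>w. 2 * d)"
    by (rule ext, rule DERIV_imp_deriv) (auto intro!: derivative_eq_intros)
  have p_derivs: "(deriv ^^ i) p 0 =
      (if i = 0 then 1 else if i = 1 then b else if i = 2 then 2 * d else 0)" for i
  proof (cases i)
    case (Suc j)
    then show ?thesis
      by (cases j) (simp_all add: funpow_Suc_right dp ddp del: funpow.simps)
  qed (simp add: p_def)
  have "(deriv ^^ m) r 0 = (deriv ^^ m) (\<lambda>w. p w * deriv f w) 0"
    by (rule higher_deriv_transform_within_open[OF r _ S])
       (use f S ode in \<open>auto intro!: holomorphic_intros holomorphic_deriv simp: p_def\<close>)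
  also have "\<dots> = (\<Sum>i = 0..m. of_nat (m choose i) * (deriv ^^ i) p 0 * F (m - i))"
    by (subst higher_deriv_mult[OF _ holomorphic_deriv[OF f S(1)] S])
       (auto intro!: holomorphic_intros simp: p_def F_def funpow_Suc_right simp del: funpow.simps)
  also have "\<dots> = (\<Sum>i = 0..m. (if i = 0 then F m else 0)
                     + (if i = 1 then of_nat m * b * F (m - 1) else 0)
                     + (if i = 2 then of_nat (m choose 2) * (2 * d) * F (m - 2) else 0))"
    by (intro sum.cong) (auto simp: p_derivs)
  also have "\<dots> = F m + of_nat m * b * F (m - 1) + of_nat (m choose 2) * (2 * d) * F (m - 2)"
    by (cases m) (simp_all add: sum.distrib)
  also have "of_nat m * b * F (m - 1) = of_nat m * b * (deriv ^^ m) f 0"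
    by (cases m) (simp_all add: F_def)
  also have "of_nat (m choose 2) * (2 * d) * F (m - 2)
      = of_nat (m * (m - 1)) * d * (deriv ^^ (m - 1)) f 0"
  proof (cases "m < 2")
    case False
    then have "Suc (m - 2) = m - 1" "m * (m - 1) = 2 * (m choose 2)"
      by (simp_all add: choose_two)
    then show ?thesis by (simp add: F_def)
  qed (auto simp: less_2_cases_iff)
  finally show ?thesis by (simp add: F_def)
qed

lemma Re_one_plus_div_one_minus_pos:
  fixes z :: complex
  assumes "norm z < 1"
  shows "0 < Re ((1 + z) / (1 - z))"
proof -
  have "(Re z)^2 + (Im z)^2 < 1"
    using assms by (simp add: cmod_def power2_eq_square)
  moreover have "(1 - Re z)^2 + (Im z)^2 > 0"
    using assms abs_Re_le_cmod[of z] by (simp add: sum_power2_gt_zero_iff)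
  moreover have "Re ((1 + z) / (1 - z)) = (1 - (Re z)^2 - (Im z)^2) / ((1 - Re z)^2 + (Im z)^2)"
    by (simp add: Re_divide power2_eq_square algebra_simps)
  ultimately show ?thesis by simp
qed

lemma abs_cube_plus_double:
  fixes a :: "'a :: linordered_idom"
  shows "\<bar>a^3 + 2*a\<bar> = \<bar>a\<bar>^3 + 2*\<bar>a\<bar>"
proof -
  have "a^3 + 2*a = a * (a^2 + 2)"
    by (simp add: algebra_simps power2_eq_square power3_eq_cube)
  then have "\<bar>a^3 + 2*a\<bar> = \<bar>a\<bar> * (\<bar>a\<bar>^2 + 2)"
    by (simp add: abs_mult)
  also have "\<dots> = \<bar>a\<bar>^3 + 2*\<bar>a\<bar>"
    by (simp add: algebra_simps power2_eq_square power3_eq_cube)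
  finally show ?thesis .
qed

lemma ka_has_field_derivative:
  assumes z: "norm z < 1"
  shows "(ka a has_field_derivative (2 * of_real a * ka a z + 1) / (1 - z^2)) (at z)"
proof -
  let ?w = "(1 + z) / (1 - z)"
  have "1 - z \<noteq> 0" "1 + z \<noteq> 0"
    using z by (auto simp: add_eq_0_iff)
  have w: "?w \<notin> \<real>\<^sub>\<le>\<^sub>0"
    using Re_one_plus_div_one_minus_pos[OF z] by (auto simp: complex_nonpos_Reals_iff)
  have dw: "((\<lambda>z. (1 + z) / (1 - z)) has_field_derivative 2 / (1 - z)^2) (at z)"
    using \<open>1 - z \<noteq> 0\<close>
    by (auto intro!: derivative_eq_intros simp: field_simps power2_eq_square)
  have "inverse ?w * (2 / (1 - z)^2) = 2 / ((1 - z) * (1 + z))"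
    using \<open>1 - z \<noteq> 0\<close> \<open>1 + z \<noteq> 0\<close>
    by (simp add: divide_simps power2_eq_square del: eq_iff_diff_eq_0)
  also have "(1 - z) * (1 + z) = 1 - z^2"
    by (simp add: algebra_simps power2_eq_square)
  finally have log_deriv: "inverse ?w * (2 / (1 - z)^2) = 2 / (1 - z^2)" .
  show ?thesis
  proof (cases "a = 0")
    case True
    have "((\<lambda>z. 1/2 * Ln ((1 + z) / (1 - z)))
        has_field_derivative 1/2 * (2 / (1 - z^2))) (at z)"
      using DERIV_cmult[OF DERIV_chain2[OF has_field_derivative_Ln[OF w] dw], of "1/2"]
      unfolding log_deriv .
    then show ?thesis using True by (simp add: ka_def[abs_def])
  next
    case False
    have "?w powr (of_real a - 1) = ?w powr of_real a * inverse ?w"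
      using w by (auto simp: powr_diff divide_inverse)
    then have "of_real a * ?w powr (of_real a - 1) * (2 / (1 - z)^2)
        = of_real a * ?w powr of_real a * (2 / (1 - z^2))"
      unfolding log_deriv[symmetric] by (simp only: mult_ac)
    then have "((\<lambda>z. ((1 + z) / (1 - z)) powr of_real a) has_field_derivative
        of_real a * ?w powr of_real a * (2 / (1 - z^2))) (at z)"
      using DERIV_chain2[OF has_field_derivative_powr[OF w, of "of_real a"] dw] by simp
    then have "((\<lambda>z. 1 / (2 * of_real a) * (((1 + z) / (1 - z)) powr of_real a - 1))
        has_field_derivative
          1 / (2 * of_real a) * (of_real a * ?w powr of_real a * (2 / (1 - z^2)) - 0)) (at z)"
      by (intro DERIV_cmult DERIV_diff DERIV_const)
    then show ?thesis using False by (simp add: ka_def[abs_def] field_simps)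
  qed
qed

lemma ka_holomorphic: "ka a holomorphic_on ball 0 1"
  by (auto simp: holomorphic_on_open intro!: exI ka_has_field_derivative)

lemma ka_at_0 [simp]: "ka a 0 = 0"
  by (simp add: ka_def)

lemma ka_higher_derivs_at_0:
  "(deriv ^^ 1) (ka a) 0 = 1"
  "(deriv ^^ 2) (ka a) 0 = 2 * of_real a"
  "(deriv ^^ 3) (ka a) 0 = 4 * of_real a ^ 2 + 2"
  "(deriv ^^ 4) (ka a) 0 = 8 * of_real a ^ 3 + 16 * of_real a"
proof -
  let ?c = "2 * complex_of_real a"
  have S: "open (ball (0::complex) 1)" "0 \<in> ball (0::complex) 1" by auto
  have ode: "(1 + 0 * w + (-1) * w^2) * deriv (ka a) w = ?c * ka a w + 1"
    if "w \<in> ball 0 1" for w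
  proof -
    have "norm (w^2) < 1" using that by (simp add: norm_power abs_square_less_1)
    then have "1 - w^2 \<noteq> 0" by auto
    then show ?thesis
      using DERIV_imp_deriv[OF ka_has_field_derivative, of w a] that by simp
  qed
  have hr: "(\<lambda>w. ?c * ka a w + 1) holomorphic_on ball 0 1"
    by (intro holomorphic_intros ka_holomorphic)
  have rhs: "(deriv ^^ m) (\<lambda>w. ?c * ka a w + 1) 0
      = ?c * (deriv ^^ m) (ka a) 0 + (if m = 0 then 1 else 0)" for m
    using higher_deriv_add[OF holomorphic_on_mult[OF holomorphic_on_const ka_holomorphic] _ S]
          higher_deriv_cmult[OF ka_holomorphic S(2,1), of m ?c]
    by simp
  have rec: "(deriv ^^ Suc m) (ka a) 0 = ?c * (deriv ^^ m) (ka a) 0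
      + of_nat (m * (m - 1)) * (deriv ^^ (m - 1)) (ka a) 0 + (if m = 0 then 1 else 0)" for m
    using higher_deriv_recurrence_quadratic_ode[OF ka_holomorphic hr S ode, of m] rhs[of m]
    by (simp add: diff_eq_eq del: funpow.simps)
  show d1: "(deriv ^^ 1) (ka a) 0 = 1" using rec[of 0] by simp
  show d2: "(deriv ^^ 2) (ka a) 0 = 2 * of_real a" using rec[of 1] d1 by (simp add: numeral_2_eq_2)
  show d3: "(deriv ^^ 3) (ka a) 0 = 4 * of_real a ^ 2 + 2"
    using rec[of 2] d1 d2 by (simp add: numeral_3_eq_3 numeral_2_eq_2 power2_eq_square)
  show "(deriv ^^ 4) (ka a) 0 = 8 * of_real a ^ 3 + 16 * of_real a"
    using rec[of 3] d2 d3 by (simp add: eval_nat_numeral algebra_simps)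
qed

lemma taylor_coeffs_of_ka_shear:
  fixes a lam :: real and h g :: "complex \<Rightarrow> complex"
  assumes hol: "h holomorphic_on ball 0 1" "g holomorphic_on ball 0 1"
    and diff: "\<forall>z \<in> ball 0 1. h z - g z = ka a z"
    and dil: "\<forall>z \<in> ball 0 1. deriv g z = of_real lam * z * deriv h z"
  shows "taylor_coeff h 2 = of_real (a + lam / 2)"
    and "taylor_coeff h 3 = of_real ((lam^2 + 2*a*lam + 2*a^2 + 1) / 3)"
    and "taylor_coeff h 4 = of_real ((a^3 + 2*a) / 3 + lam * (lam^2 + 2*a*lam + 2*a^2 + 1) / 4)"
    and "taylor_coeff g 3 = of_real ((lam^2 + 2*a*lam) / 3)"
    and "taylor_coeff g 4 = of_real (lam * (lam^2 + 2*a*lam + 2*a^2 + 1) / 4)"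
proof -
  let ?L = "complex_of_real lam"
  have S: "open (ball (0::complex) 1)" "0 \<in> ball (0::complex) 1" by auto
  have K: "(deriv ^^ n) (\<lambda>z. h z - g z) 0 = (deriv ^^ n) (ka a) 0" for n
    by (rule higher_deriv_transform_within_open[OF _ ka_holomorphic S])
       (use hol diff in \<open>auto intro!: holomorphic_intros\<close>)
  have g_derivs: "(deriv ^^ n) g 0 = (deriv ^^ n) h 0 - (deriv ^^ n) (ka a) 0" for n
    using higher_deriv_diff[OF hol S, of n] K[of n] by simp
  have ode: "(1 + (- ?L) * w + 0 * w^2) * deriv h w = deriv (\<lambda>z. h z - g z) w"
    if "w \<in> ball 0 1" for w
  proof -
    have "deriv (\<lambda>z. h z - g z) w = deriv h w - deriv g w"
      using hol that by (intro deriv_diff holomorphic_on_imp_differentiable_at) auto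
    then show ?thesis using dil that by (simp add: algebra_simps)
  qed
  have hr: "deriv (\<lambda>z. h z - g z) holomorphic_on ball 0 1"
    by (intro holomorphic_deriv holomorphic_intros hol) simp
  have rec: "(deriv ^^ Suc m) h 0
      = of_nat m * ?L * (deriv ^^ m) h 0 + (deriv ^^ Suc m) (ka a) 0" for m
    using higher_deriv_recurrence_quadratic_ode[OF hol(1) hr S ode, of m] K[of "Suc m"]
    by (simp add: funpow_Suc_right diff_eq_eq del: funpow.simps)
  note ka = ka_higher_derivs_at_0[of a]
  have h1: "(deriv ^^ 1) h 0 = 1" using rec[of 0] ka by simp
  have h2: "(deriv ^^ 2) h 0 = ?L + 2 * of_real a"
    using rec[of 1] ka h1 by (simp add: numeral_2_eq_2 del: funpow.simps)
  have h3: "(deriv ^^ 3) h 0 = 2 * ?L * (?L + 2 * of_real a) + 4 * of_real a ^ 2 + 2"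
    using rec[of 2] ka h2 by (simp add: numeral_3_eq_3 numeral_2_eq_2 del: funpow.simps)
  have h4: "(deriv ^^ 4) h 0 = 3 * ?L * (deriv ^^ 3) h 0 + 8 * of_real a ^ 3 + 16 * of_real a"
    using rec[of 3] ka by (simp add: eval_nat_numeral del: funpow.simps)
  note coeff_simps = taylor_coeff_def fact_numeral field_simps power2_eq_square power3_eq_cube
  show "taylor_coeff h 2 = of_real (a + lam / 2)"
    using h2 by (simp add: coeff_simps)
  show "taylor_coeff h 3 = of_real ((lam^2 + 2*a*lam + 2*a^2 + 1) / 3)"
    using h3 by (simp add: coeff_simps)
  show "taylor_coeff h 4 = of_real ((a^3 + 2*a) / 3 + lam * (lam^2 + 2*a*lam + 2*a^2 + 1) / 4)"
    using h4 h3 by (simp add: coeff_simps)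
  show "taylor_coeff g 3 = of_real ((lam^2 + 2*a*lam) / 3)"
    using h3 ka g_derivs[of 3] by (simp add: coeff_simps)
  show "taylor_coeff g 4 = of_real (lam * (lam^2 + 2*a*lam + 2*a^2 + 1) / 4)"
    using h4 h3 ka g_derivs[of 4] by (simp add: coeff_simps)
qed

theorem theorem2p4:
  fixes a lam :: real and h g :: "complex \<Rightarrow> complex"
  assumes lam: "0 \<le> lam" "lam < 1"
    and hol: "h holomorphic_on ball 0 1" "g holomorphic_on ball 0 1"
    and norm: "h 0 = 0" "deriv h 0 = 1" "g 0 = 0"
    and diff: "\<forall>z \<in> ball 0 1. h z - g z = ka a z"
    and dil: "\<forall>z \<in> ball 0 1. deriv h z \<noteq> 0 \<and> deriv g z / deriv h z = complex_of_real lam * z"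
  shows "norm (taylor_coeff h 2) \<le> \<bar>a\<bar> + lam / 2
    \<and> norm (taylor_coeff h 3) \<le> (lam^2 + 2*\<bar>a\<bar>*lam + 2*a^2 + 1) / 3
    \<and> norm (taylor_coeff h 4) \<le> \<bar>a\<bar>^3 / 3 + 2 * \<bar>a\<bar> / 3 + lam * (lam^2 + 2*\<bar>a\<bar>*lam + 2*a^2 + 1) / 4
    \<and> norm (taylor_coeff g 3) \<le> lam^2 / 3 + 2 * \<bar>a\<bar> * lam / 3
    \<and> norm (taylor_coeff g 4) \<le> lam * (lam^2 + 2*\<bar>a\<bar>*lam + 2*a^2 + 1) / 4
    \<and> (0 \<le> a \<longrightarrow>
         norm (taylor_coeff h 2) = \<bar>a\<bar> + lam / 2
       \<and> norm (taylor_coeff h 3) = (lam^2 + 2*\<bar>a\<bar>*lam + 2*a^2 + 1) / 3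
       \<and> norm (taylor_coeff h 4) = \<bar>a\<bar>^3 / 3 + 2 * \<bar>a\<bar> / 3 + lam * (lam^2 + 2*\<bar>a\<bar>*lam + 2*a^2 + 1) / 4
       \<and> norm (taylor_coeff g 3) = lam^2 / 3 + 2 * \<bar>a\<bar> * lam / 3
       \<and> norm (taylor_coeff g 4) = lam * (lam^2 + 2*\<bar>a\<bar>*lam + 2*a^2 + 1) / 4)"
proof -
  \<comment> \<open>The normalisations at 0 and \<open>lam < 1\<close> are not needed: coefficients of order \<open>\<ge> 2\<close>
    ignore additive constants, and \<open>h'(0) = 1\<close> is forced by the two differential equations.\<close>
  have "\<forall>z \<in> ball 0 1. deriv g z = of_real lam * z * deriv h z"
    using dil by (simp add: divide_eq_eq)
  note coeffs = taylor_coeffs_of_ka_shear[OF hol diff this]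
  define P where "P b = lam^2 + 2*b*lam + 2*b^2 + 1" for b :: real
  have P_pos: "0 < P a"
    unfolding P_def by (smt (verit) zero_le_power2 power2_sum)
  have P_mono: "P a \<le> P \<bar>a\<bar>"
    unfolding P_def using lam(1) by (simp add: mult_right_mono)
  have "\<bar>(a^3 + 2*a) / 3\<bar> = \<bar>a\<bar>^3 / 3 + 2 * \<bar>a\<bar> / 3"
    using abs_cube_plus_double[of a] by simp
  moreover have "\<bar>lam * P a / 4\<bar> \<le> lam * P \<bar>a\<bar> / 4"
    using P_pos mult_left_mono[OF P_mono lam(1)] lam(1) by simp
  ultimately have h4: "\<bar>(a^3 + 2*a) / 3 + lam * P a / 4\<bar>
      \<le> \<bar>a\<bar>^3 / 3 + 2 * \<bar>a\<bar> / 3 + lam * P \<bar>a\<bar> / 4"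
    using abs_triangle_ineq[of "(a^3 + 2*a) / 3" "lam * P a / 4"] by linarith
  have g3: "\<bar>(lam^2 + 2*a*lam) / 3\<bar> \<le> lam^2 / 3 + 2 * \<bar>a\<bar> * lam / 3"
    using abs_triangle_ineq[of "lam^2" "2*a*lam"] lam(1) by (simp add: abs_mult mult.commute)
  show ?thesis
    unfolding coeffs norm_of_real
    using h4 g3 P_pos P_mono lam(1) by (simp add: P_def mult_left_mono)
qed
end
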